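(* Let $z_i=(y_i',x_i')'$, $i=1,\dots,n$, with $y_i\in\mathbb{R}^q$, $x_i\in\mathbb{R}^p$, be a sample satisfying the multivariate linear model $y_i=B_0'x_i+u_i$ ($B_0\in\mathbb{R}^{p\times q}$). Let $\rho_0,\rho_1$ be $\rho$-functions with $\rho_1\le\rho_0$, let $(\tilde B_n,\tilde\Sigma_n)\in\mathbb{R}^{p\times q}\times\mathcal{S}_q$ be initial estimates with $|\tilde\Sigma_n|=1$, let $\hat\sigma_n=s\big(d_1(\tilde B_n,\tilde\Sigma_n),\dots,d_n(\tilde B_n,\tilde\Sigma_n)\big)$ be the M-scale of the Mahalanobis norms computed with $\rho_0$ and $b=0.5$, and let $$S(B,\Gamma)=\sum_{i=1}^n\rho_1\!\left(\frac{d_i(B,\Gamma)}{\hat\sigma_n}\right).$$ Let $k_n=\max_{\|v\|+\|w\|>0}\#\{i: v'x_i+w'y_i=0\}$ ($v\in\mathbb{R}^p$, $w\in\mathbb{R}^q$). If $k_n/n<0.5$, then there exists a pair $(\hat B_n,\hat\Gamma_n)$ that minimizes $S(B,\Gamma)$ over all $(B,\Gamma)\in\mathbb{R}^{p\times q}\times\mathcal{S}_q$ with $|\Gamma|=1$.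
   Context: $\mathcal{S}_q$ denotes the set of positive definite symmetric $q\times q$ matrices and $|\cdot|$ the determinant. A $\rho$-function is a continuous nondecreasing function of $|u|$ with $\rho(0)=0$, $\sup_u\rho(u)=1$, and $\rho(u)$ strictly increasing for nonnegative $u$ with $\rho(u)<1$. For $B\in\mathbb{R}^{p\times q}$, $\Sigma\in\mathcal{S}_q$, the Mahalanobis norms of the residuals are $d_i(B,\Sigma)=\big((y_i-B'x_i)'\Sigma^{-1}(y_i-B'x_i)\big)^{1/2}$. Given $v=(v_1,\dots,v_n)$, the M-scale $s(v)$ (with $\rho$-function $\rho_0$ and $b\in(0,1)$) is the value $s$ solving $\frac1n\sum_{i=1}^n\rho_0(v_i/s)=b$, or $s=0$ if $\#\{i:v_i=0\}\ge n(1-b)$. *)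

theory Defs
  imports "HOL-Analysis.Analysis"
begin

definition rho_function :: "(real \<Rightarrow> real) \<Rightarrow> bool" where
  "rho_function \<rho> \<longleftrightarrow>
     continuous_on UNIV \<rho> \<and>
     (\<forall>u. \<rho> u = \<rho> \<bar>u\<bar>) \<and>
     (\<forall>u v. 0 \<le> u \<longrightarrow> u \<le> v \<longrightarrow> \<rho> u \<le> \<rho> v) \<and>
     \<rho> 0 = 0 \<and>
     (SUP u. \<rho> u) = 1 \<and>
     (\<forall>u v. 0 \<le> u \<longrightarrow> u < v \<longrightarrow> \<rho> u < 1 \<longrightarrow> \<rho> u < \<rho> v)"

definition pd_sym :: "real^'q^'q \<Rightarrow> bool" where
  "pd_sym S \<longleftrightarrow> transpose S = S \<and> (\<forall>x. x \<noteq> 0 \<longrightarrow> x \<bullet> (S *v x) > 0)"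

definition maha :: "(nat \<Rightarrow> real^'p) \<Rightarrow> (nat \<Rightarrow> real^'q) \<Rightarrow> real^'q^'p \<Rightarrow> real^'q^'q \<Rightarrow> nat \<Rightarrow> real" where
  "maha x y B S i =
     sqrt ((y i - transpose B *v x i) \<bullet> (matrix_inv S *v (y i - transpose B *v x i)))"

definition mscale :: "(real \<Rightarrow> real) \<Rightarrow> real \<Rightarrow> nat \<Rightarrow> (nat \<Rightarrow> real) \<Rightarrow> real" where
  "mscale \<rho>0 b n v =
     (if real (card {i. i < n \<and> v i = 0}) \<ge> real n * (1 - b) then 0
      else (THE s. s > 0 \<and> (1 / real n) * (\<Sum>i<n. \<rho>0 (v i / s)) = b))"

definition kn :: "nat \<Rightarrow> (nat \<Rightarrow> real^'p) \<Rightarrow> (nat \<Rightarrow> real^'q) \<Rightarrow> nat" where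
  "kn n x y = Max {card {i. i < n \<and> v \<bullet> x i + w \<bullet> y i = 0} | v w. v \<noteq> 0 \<or> w \<noteq> 0}"

end

theory Submission
  imports Defs
begin

text \<open>
  Reparametrise by the precision matrix \<open>P = \<Gamma>\<^sup>-\<^sup>1\<close>, in which the objective is continuous.
  The initial estimate reaches the level \<open>n/2\<close>, since \<open>\<rho>\<^sub>1 \<le> \<rho>\<^sub>0\<close> and \<open>\<hat>\<sigma>\<^sub>n\<close> is the M-scale.
  Below that level fewer than \<open>n - k\<^sub>n\<close> residuals have Mahalanobis norm above a fixed
  threshold \<open>T\<close>, while by definition of \<open>k\<^sub>n\<close> at most \<open>k\<^sub>n\<close> observations lie in a uniform
  neighbourhood of any hyperplane. One observation is therefore far from the hyperplane
  \<open>{(x, y). w'(y - B'x) = 0}\<close> and yet has a short residual; Cauchy-Schwarz turns this into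
  \<open>\<epsilon>\<^sup>2 (|Bw|\<^sup>2 + |w|\<^sup>2) \<le> T\<^sup>2 w'\<Gamma>w\<close>. This bounds \<open>\<Gamma>\<close> from below, hence \<open>P\<close> from above,
  hence (\<open>det P = 1\<close> and compactness) \<open>\<Gamma>\<close> from above and finally \<open>B\<close>. So the sublevel
  set lies in a compact set, where the continuous objective attains its minimum.
\<close>

section \<open>Symmetric positive semidefinite matrices\<close>

definition psd_sym :: "real^'n^'n \<Rightarrow> bool" where
  "psd_sym P \<longleftrightarrow> transpose P = P \<and> (\<forall>x. 0 \<le> x \<bullet> (P *v x))"

lemma pd_sym_imp_psd_sym: "pd_sym P \<Longrightarrow> psd_sym P"
  unfolding pd_sym_def psd_sym_def by (metis inner_zero_left order.refl less_imp_le)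

lemma transpose_eq_iff: "transpose P = P \<longleftrightarrow> (\<forall>i j. P$i$j = P$j$i)"
  for P :: "'a^'n^'n"
  by (auto simp: vec_eq_iff transpose_def)

lemma quadratic_form_expand:
  "z \<bullet> (P *v z) = (\<Sum>i\<in>UNIV. z$i * (\<Sum>j\<in>UNIV. P$i$j * z$j))"
  for z :: "real^'n" and P :: "real^'n^'n"
  by (simp add: inner_vec_def matrix_vector_mult_def)

lemma continuous_on_det: "continuous_on UNIV (det :: real^'n^'n \<Rightarrow> real)"
  unfolding det_def by (intro continuous_intros)

lemma inner_matrix_sym_commute:
  fixes A :: "real^'n^'n"
  assumes "transpose A = A"
  shows "a \<bullet> (A *v b) = b \<bullet> (A *v a)"
  by (metis assms dot_lmul_matrix inner_commute transpose_transpose vector_transpose_matrix)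

lemma inner_transpose_matrix: "w \<bullet> (transpose B *v z) = (B *v w) \<bullet> z"
  for B :: "real^'q^'p" and z :: "real^'p"
  by (metis dot_lmul_matrix inner_commute transpose_transpose vector_transpose_matrix)

lemma psd_cauchy_schwarz:
  fixes A :: "real^'n^'n"
  assumes "psd_sym A"
  shows "(a \<bullet> (A *v b))\<^sup>2 \<le> (a \<bullet> (A *v a)) * (b \<bullet> (A *v b))"
proof -
  define \<alpha> \<beta> \<gamma> where "\<alpha> = a \<bullet> (A *v a)" and "\<beta> = a \<bullet> (A *v b)" and "\<gamma> = b \<bullet> (A *v b)"
  have sym: "transpose A = A" and psd: "\<And>x. 0 \<le> x \<bullet> (A *v x)"
    using assms unfolding psd_sym_def by auto
  have quadratic: "0 \<le> \<alpha> + 2*t*\<beta> + t\<^sup>2*\<gamma>" for t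
  proof -
    have "0 \<le> (a + t *\<^sub>R b) \<bullet> (A *v (a + t *\<^sub>R b))" by (rule psd)
    also have "\<dots> = \<alpha> + t * \<beta> + t * (b \<bullet> (A *v a)) + t\<^sup>2 * \<gamma>"
      unfolding \<alpha>_def \<beta>_def \<gamma>_def
      by (simp add: matrix_vector_right_distrib matrix_vector_mult_scaleR inner_add_left
          inner_add_right algebra_simps power2_eq_square)
    finally show ?thesis
      using inner_matrix_sym_commute[OF sym, of b a] unfolding \<beta>_def by simp
  qed
  show ?thesis
  proof (cases "\<gamma> = 0")
    case True
    have "\<beta> = 0"
    proof (rule ccontr)
      assume "\<beta> \<noteq> 0"
      then have "\<alpha> + 2 * (-(\<alpha>+1)/(2*\<beta>)) * \<beta> = -1" by (simp add: field_simps)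
      then show False using quadratic[of "-(\<alpha>+1)/(2*\<beta>)"] True by simp
    qed
    then show ?thesis using True unfolding \<beta>_def[symmetric] \<gamma>_def[symmetric] by simp
  next
    case False
    then have "\<gamma> > 0" using psd[of b] \<gamma>_def by simp
    have "\<alpha> + 2*(-\<beta>/\<gamma>)*\<beta> + (-\<beta>/\<gamma>)\<^sup>2*\<gamma> = \<alpha> - \<beta>\<^sup>2/\<gamma>"
      using \<open>\<gamma> > 0\<close> by (simp add: field_simps power2_eq_square)
    then have "\<beta>\<^sup>2/\<gamma> \<le> \<alpha>" using quadratic[of "-\<beta>/\<gamma>"] by simp
    then have "\<beta>\<^sup>2 \<le> \<alpha> * \<gamma>" using \<open>\<gamma> > 0\<close> by (simp add: field_simps)
    then show ?thesis unfolding \<alpha>_def \<beta>_def \<gamma>_def .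
  qed
qed

lemma pd_sym_det_nz: "pd_sym P \<Longrightarrow> det P \<noteq> 0"
  unfolding pd_sym_def
  by (metis inner_zero_right invertible_det_nz invertible_left_inverse
      less_numeral_extra(3) matrix_left_invertible_ker)

lemma psd_sym_det_nz_imp_pd_sym:
  fixes P :: "real^'n^'n"
  assumes "psd_sym P" and "det P \<noteq> 0"
  shows "pd_sym P"
  unfolding pd_sym_def
proof (intro conjI allI impI)
  show "transpose P = P" using assms(1) unfolding psd_sym_def by blast
  fix x :: "real^'n" assume "x \<noteq> 0"
  then have "P *v x \<noteq> 0"
    using assms(2) invertible_det_nz invertible_left_inverse matrix_left_invertible_ker by metis
  show "0 < x \<bullet> (P *v x)"
  proof (rule ccontr)
    assume "\<not> 0 < x \<bullet> (P *v x)"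
    then have "x \<bullet> (P *v x) = 0" using assms(1) unfolding psd_sym_def by (meson not_le order.antisym)
    then have "((P *v x) \<bullet> (P *v x))\<^sup>2 \<le> 0" using psd_cauchy_schwarz[OF assms(1), of "P *v x" x] by simp
    then show False using \<open>P *v x \<noteq> 0\<close> by simp
  qed
qed

lemma matrix_inv_mul_det_nz:
  fixes A :: "real^'n^'n"
  assumes "det A \<noteq> 0"
  shows matrix_mul_matrix_inv: "A ** matrix_inv A = mat 1"
    and matrix_inv_matrix_mul: "matrix_inv A ** A = mat 1"
proof -
  have "invertible A" using assms invertible_det_nz by blast
  then have "A ** matrix_inv A = mat 1 \<and> matrix_inv A ** A = mat 1"
    unfolding matrix_inv_def invertible_def by (rule someI_ex)
  then show "A ** matrix_inv A = mat 1" "matrix_inv A ** A = mat 1" by auto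
qed

lemma matrix_inv_unique:
  fixes A B :: "real^'n^'n"
  assumes "A ** B = mat 1" "B ** A = mat 1"
  shows "matrix_inv A = B"
proof -
  have "det A \<noteq> 0" using assms invertible_def invertible_det_nz by blast
  then have "matrix_inv A = matrix_inv A ** (A ** B)" by (simp add: assms matrix_mul_rid)
  also have "\<dots> = B"
    by (simp add: matrix_mul_assoc matrix_inv_matrix_mul[OF \<open>det A \<noteq> 0\<close>] matrix_mul_lid)
  finally show ?thesis .
qed

lemma matrix_inv_matrix_inv: "det A \<noteq> 0 \<Longrightarrow> matrix_inv (matrix_inv A) = A"
  for A :: "real^'n^'n"
  by (rule matrix_inv_unique[OF matrix_inv_matrix_mul matrix_mul_matrix_inv])

lemma det_matrix_inv: "det A \<noteq> 0 \<Longrightarrow> det (matrix_inv A) = inverse (det A)"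
  for A :: "real^'n^'n"
  using det_mul[of A "matrix_inv A"] by (simp add: matrix_mul_matrix_inv field_simps)

lemma matrix_vector_mul_matrix_inv: "det A \<noteq> 0 \<Longrightarrow> A *v (matrix_inv A *v x) = x"
  for A :: "real^'n^'n"
  by (simp add: matrix_vector_mul_assoc matrix_mul_matrix_inv)

lemma psd_sym_matrix_inv:
  fixes A :: "real^'n^'n"
  assumes psd: "psd_sym A" and det: "det A \<noteq> 0"
  shows "psd_sym (matrix_inv A)"
  unfolding psd_sym_def
proof (intro conjI allI)
  have "transpose (matrix_inv A) ** A = mat 1"
    using arg_cong[OF matrix_mul_matrix_inv[OF det], of transpose] psd
    by (simp add: matrix_transpose_mul transpose_mat psd_sym_def)
  then have "transpose (matrix_inv A) = transpose (matrix_inv A) ** (A ** matrix_inv A)"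
    by (simp add: matrix_mul_matrix_inv[OF det] matrix_mul_rid)
  also have "\<dots> = matrix_inv A"
    by (simp add: matrix_mul_assoc \<open>transpose (matrix_inv A) ** A = mat 1\<close> matrix_mul_lid)
  finally show "transpose (matrix_inv A) = matrix_inv A" .
  fix x
  have "x \<bullet> (matrix_inv A *v x) = (matrix_inv A *v x) \<bullet> (A *v (matrix_inv A *v x))"
    by (simp add: matrix_vector_mul_matrix_inv[OF det] inner_commute)
  then show "0 \<le> x \<bullet> (matrix_inv A *v x)" using psd unfolding psd_sym_def by simp
qed

lemma inner_square_le_quadratic_forms:
  fixes G :: "real^'n^'n"
  assumes "psd_sym G" and "det G \<noteq> 0"
  shows "(w \<bullet> r)\<^sup>2 \<le> (w \<bullet> (G *v w)) * (r \<bullet> (matrix_inv G *v r))"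
  using psd_cauchy_schwarz[OF assms(1), of w "matrix_inv G *v r"]
  by (simp add: matrix_vector_mul_matrix_inv[OF assms(2)] inner_commute)

lemma quadratic_form_inverse_le:
  fixes M :: "real^'n^'n"
  assumes "det M \<noteq> 0" and "c > 0" and low: "\<forall>z. c * (norm z)\<^sup>2 \<le> z \<bullet> (M *v z)"
  shows "x \<bullet> (matrix_inv M *v x) \<le> (norm x)\<^sup>2 / c"
proof -
  define z where "z = matrix_inv M *v x"
  have "x \<bullet> z = z \<bullet> (M *v z)"
    using matrix_vector_mul_matrix_inv[OF assms(1), of x] by (simp add: z_def inner_commute)
  then have "c * (norm z)\<^sup>2 \<le> x \<bullet> z" using low by simp
  also have "\<dots> \<le> norm x * norm z" by (rule norm_cauchy_schwarz)
  finally have "c * norm z \<le> norm x"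
    by (cases "z = 0") (auto simp: power2_eq_square mult.assoc)
  then have "norm x * norm z \<le> norm x * (norm x / c)"
    using \<open>c > 0\<close> by (intro mult_left_mono) (simp_all add: field_simps)
  then show ?thesis
    using norm_cauchy_schwarz[of x z] by (simp add: z_def power2_eq_square)
qed

section \<open>Compact sets of matrices\<close>

definition entry_box :: "real \<Rightarrow> (real^'n^'m) set" where
  "entry_box R = {A. \<forall>i j. \<bar>A$i$j\<bar> \<le> R}"

definition psd_unimodular_box :: "real \<Rightarrow> (real^'n^'n) set" where
  "psd_unimodular_box R = {P. psd_sym P \<and> det P = 1} \<inter> entry_box R"

lemma psd_entry_le:
  fixes A :: "real^'n^'n"
  assumes psd: "psd_sym A" and up: "\<forall>x. x \<bullet> (A *v x) \<le> C * (norm x)\<^sup>2"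
  shows "\<bar>A$i$j\<bar> \<le> C"
proof -
  have diag: "0 \<le> axis k 1 \<bullet> (A *v axis k 1) \<and> axis k 1 \<bullet> (A *v axis k 1) \<le> C" for k
    using psd up[rule_format, of "axis k 1"] unfolding psd_sym_def by simp
  have entry: "axis i 1 \<bullet> (A *v axis j 1) = A$i$j"
    by (simp add: inner_axis' matrix_vector_mul_component inner_axis)
  have "(A$i$j)\<^sup>2 \<le> (axis i 1 \<bullet> (A *v axis i 1)) * (axis j 1 \<bullet> (A *v axis j 1))"
    using psd_cauchy_schwarz[OF psd, of "axis i 1" "axis j 1"] by (simp add: entry)
  also have "\<dots> \<le> C\<^sup>2"
    using diag[of i] diag[of j] by (simp add: power2_eq_square mult_mono')
  finally have "(A$i$j)\<^sup>2 \<le> C\<^sup>2" .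
  moreover have "0 \<le> C" using diag[of i] by linarith
  ultimately show ?thesis by (metis abs_le_square_iff abs_of_nonneg)
qed

lemma norm_le_entry_box:
  fixes A :: "real^'n^'m"
  assumes "A \<in> entry_box R"
  shows "norm A \<le> real CARD('m) * real CARD('n) * R"
proof -
  have "norm A \<le> (\<Sum>i\<in>UNIV. \<bar>norm (A$i)\<bar>)" by (simp add: norm_vec_def L2_set_le_sum)
  also have "\<dots> \<le> (\<Sum>i\<in>(UNIV::'m set). real CARD('n) * R)"
  proof (rule sum_mono)
    fix i
    have "norm (A$i) \<le> (\<Sum>j\<in>UNIV. \<bar>A$i$j\<bar>)" by (rule norm_le_l1_cart)
    also have "\<dots> \<le> (\<Sum>j\<in>(UNIV::'n set). R)"
      using assms unfolding entry_box_def by (intro sum_mono) auto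
    finally show "\<bar>norm (A$i)\<bar> \<le> real CARD('n) * R" by simp
  qed
  finally show ?thesis by simp
qed

lemma compact_entry_box: "compact (entry_box R)"
proof -
  have "closed (entry_box R)" unfolding entry_box_def
    by (intro closed_Collect_all closed_Collect_le continuous_intros)
  moreover have "bounded (entry_box R)" unfolding bounded_iff using norm_le_entry_box by blast
  ultimately show ?thesis using compact_eq_bounded_closed by blast
qed

lemma compact_psd_unimodular_box: "compact (psd_unimodular_box R)"
proof -
  have "closed {P :: real^'n^'n. psd_sym P \<and> det P = 1}"
    unfolding psd_sym_def transpose_eq_iff quadratic_form_expand
    by (intro closed_Collect_all closed_Collect_le closed_Collect_conj closed_Collect_eq
        continuous_intros continuous_on_det)
  then show ?thesis
    unfolding psd_unimodular_box_def by (intro closed_Int_compact compact_entry_box)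
qed

lemma psd_unimodular_box_uniform_pd:
  "\<exists>c>0. \<forall>P\<in>psd_unimodular_box R. \<forall>z::real^'n. c * (norm z)\<^sup>2 \<le> z \<bullet> (P *v z)"
proof (cases "psd_unimodular_box R = ({} :: (real^'n^'n) set)")
  case True then show ?thesis by (intro exI[of _ 1]) auto
next
  case False
  then obtain P1 :: "real^'n^'n" where P1: "P1 \<in> psd_unimodular_box R" by blast
  define K where "K = (psd_unimodular_box R :: (real^'n^'n) set) \<times> sphere (0::real^'n) 1"
  define g where "g = (\<lambda>p::(real^'n^'n) \<times> (real^'n). snd p \<bullet> (fst p *v snd p))"
  have "compact K" unfolding K_def by (intro compact_Times compact_psd_unimodular_box compact_sphere)
  moreover have "(P1, axis undefined 1) \<in> K" using P1 unfolding K_def by simp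
  moreover have "continuous_on K g" unfolding g_def quadratic_form_expand by (intro continuous_intros)
  ultimately obtain p where "p \<in> K" and min: "\<forall>q\<in>K. g p \<le> g q"
    using continuous_attains_inf[of K g] by blast
  have "pd_sym (fst p)" using \<open>p \<in> K\<close> unfolding K_def psd_unimodular_box_def
    by (auto intro: psd_sym_det_nz_imp_pd_sym)
  moreover have "snd p \<noteq> 0" using \<open>p \<in> K\<close> unfolding K_def by auto
  ultimately have "g p > 0" unfolding g_def pd_sym_def by blast
  moreover have "g p * (norm z)\<^sup>2 \<le> z \<bullet> (P *v z)" if "P \<in> psd_unimodular_box R" for P and z :: "real^'n"
  proof (cases "z = 0")
    case False
    then have "(P, z /\<^sub>R norm z) \<in> K" using that unfolding K_def by simp
    then have "g p \<le> (z /\<^sub>R norm z) \<bullet> (P *v (z /\<^sub>R norm z))" using min unfolding g_def by force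
    also have "\<dots> = (z \<bullet> (P *v z)) / (norm z)\<^sup>2"
      by (simp add: matrix_vector_mult_scaleR power2_eq_square divide_inverse)
    finally show ?thesis using False by (simp add: field_simps)
  qed simp
  ultimately show ?thesis by blast
qed

lemma psd_unimodular_box_subset_matrix_inv_image:
  "psd_unimodular_box R \<subseteq> matrix_inv ` {\<Gamma>::real^'n^'n. pd_sym \<Gamma> \<and> det \<Gamma> = 1}"
proof
  fix P :: "real^'n^'n" assume "P \<in> psd_unimodular_box R"
  then have psd: "psd_sym P" and det: "det P = 1" unfolding psd_unimodular_box_def by auto
  have "det (matrix_inv P) = 1" using det_matrix_inv[of P] det by simp
  moreover have "pd_sym (matrix_inv P)"
    using psd_sym_matrix_inv[OF psd] det calculation by (auto intro: psd_sym_det_nz_imp_pd_sym)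
  moreover have "P = matrix_inv (matrix_inv P)" using matrix_inv_matrix_inv[of P] det by simp
  ultimately show "P \<in> matrix_inv ` {\<Gamma>. pd_sym \<Gamma> \<and> det \<Gamma> = 1}" by blast
qed

text \<open>
  The hypothesis bounds \<open>\<Gamma>\<^sup>-\<^sup>1\<close> from above; the uniform positivity on the compact set
  \<open>psd_unimodular_box\<close> then bounds \<open>\<Gamma>\<close> from above, and with it \<open>B\<close>.
\<close>

lemma quadratic_domination_imp_bounded:
  assumes "c > 0"
  shows "\<exists>RB RP. \<forall>(B::real^'q^'p) (\<Gamma>::real^'q^'q).
           pd_sym \<Gamma> \<and> det \<Gamma> = 1 \<and> (\<forall>w. c * ((norm (B *v w))\<^sup>2 + (norm w)\<^sup>2) \<le> w \<bullet> (\<Gamma> *v w))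
           \<longrightarrow> B \<in> entry_box RB \<and> matrix_inv \<Gamma> \<in> psd_unimodular_box RP"
proof -
  obtain c' where "c' > 0"
    and c': "\<forall>P\<in>psd_unimodular_box (1/c). \<forall>z::real^'q. c' * (norm z)\<^sup>2 \<le> z \<bullet> (P *v z)"
    using psd_unimodular_box_uniform_pd by blast
  have "B \<in> entry_box (sqrt (1 / (c * c'))) \<and> matrix_inv \<Gamma> \<in> psd_unimodular_box (1/c)"
    if pd: "pd_sym \<Gamma>" and det: "det \<Gamma> = 1"
      and dom: "\<forall>w. c * ((norm (B *v w))\<^sup>2 + (norm w)\<^sup>2) \<le> w \<bullet> (\<Gamma> *v w)"
    for B :: "real^'q^'p" and \<Gamma> :: "real^'q^'q"
  proof -
    have "\<forall>w. c * (norm w)\<^sup>2 \<le> w \<bullet> (\<Gamma> *v w)"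
    proof
      fix w :: "real^'q"
      have "c * (norm w)\<^sup>2 \<le> c * ((norm (B *v w))\<^sup>2 + (norm w)\<^sup>2)"
        using \<open>c > 0\<close> by (intro mult_left_mono) auto
      then show "c * (norm w)\<^sup>2 \<le> w \<bullet> (\<Gamma> *v w)" using dom by (meson order.trans)
    qed
    then have "x \<bullet> (matrix_inv \<Gamma> *v x) \<le> (1/c) * (norm x)\<^sup>2" for x
      using quadratic_form_inverse_le[OF _ \<open>c > 0\<close>, of \<Gamma> x] det by simp
    moreover have psd: "psd_sym (matrix_inv \<Gamma>)"
      using psd_sym_matrix_inv[OF pd_sym_imp_psd_sym[OF pd]] det by simp
    ultimately have P: "matrix_inv \<Gamma> \<in> psd_unimodular_box (1/c)"
      using det_matrix_inv[of \<Gamma>] det psd_entry_le[OF psd]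
      unfolding psd_unimodular_box_def entry_box_def by auto
    have "w \<bullet> (\<Gamma> *v w) \<le> (norm w)\<^sup>2 / c'" for w
      using quadratic_form_inverse_le[of "matrix_inv \<Gamma>" c' w] c' P \<open>c' > 0\<close> det
      by (simp add: det_matrix_inv matrix_inv_matrix_inv)
    have "\<bar>B$i$j\<bar> \<le> sqrt (1 / (c * c'))" for i j
    proof -
      have "c * ((norm (B *v axis j 1))\<^sup>2 + 1) \<le> 1 / c'"
        using dom[rule_format, of "axis j 1"] \<open>\<And>w. w \<bullet> (\<Gamma> *v w) \<le> (norm w)\<^sup>2 / c'\<close>[of "axis j 1"]
        by simp
      then have "c * (norm (B *v axis j 1))\<^sup>2 \<le> 1 / c'"
        using \<open>c > 0\<close> by (simp add: distrib_left)
      then have "(norm (B *v axis j 1))\<^sup>2 \<le> 1 / (c * c')"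
        using \<open>c > 0\<close> \<open>c' > 0\<close> by (simp add: field_simps)
      moreover have "(B *v axis j 1)$i = B$i$j"
        by (simp add: matrix_vector_mul_component inner_axis)
      then have "\<bar>B$i$j\<bar>\<^sup>2 \<le> (norm (B *v axis j 1))\<^sup>2"
        by (metis abs_ge_zero component_le_norm_cart power_mono)
      ultimately have "\<bar>B$i$j\<bar>\<^sup>2 \<le> 1 / (c * c')" by linarith
      then show ?thesis by (rule real_le_rsqrt)
    qed
    then show ?thesis using P unfolding entry_box_def by blast
  qed
  then show ?thesis by blast
qed

section \<open>Observations near hyperplanes\<close>

lemma card_hyperplane_le_kn:
  assumes "v \<noteq> 0 \<or> w \<noteq> 0"
  shows "card {i. i < n \<and> v \<bullet> x i + w \<bullet> y i = 0} \<le> kn n x y"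
proof -
  have "card {i. i < n \<and> P i} \<le> n" for P
    using card_mono[of "{..<n}" "{i. i < n \<and> P i}"] by auto
  then have "{card {i. i < n \<and> v \<bullet> x i + w \<bullet> y i = 0} |v w. v \<noteq> 0 \<or> w \<noteq> 0} \<subseteq> {..n}"
    by auto
  then show ?thesis
    unfolding kn_def using assms by (intro Max_ge) (auto intro: finite_subset)
qed

lemma hyperplane_sum_pos_on_sphere:
  fixes x :: "nat \<Rightarrow> real^'p" and y :: "nat \<Rightarrow> real^'q"
  assumes A: "A \<subseteq> {..<n}" "kn n x y < card A"
  shows "\<exists>m>0. \<forall>z\<in>sphere 0 1. m \<le> (\<Sum>i\<in>A. \<bar>fst z \<bullet> x i + snd z \<bullet> y i\<bar>)"
proof -
  define h where "h = (\<lambda>z. \<Sum>i\<in>A. \<bar>fst z \<bullet> x i + snd z \<bullet> y i\<bar>)"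
  have "finite A" using A finite_subset by blast
  have "(0, axis undefined 1) \<in> sphere (0::(real^'p) \<times> (real^'q)) 1" by (simp add: norm_Pair)
  moreover have "continuous_on (sphere 0 1) h" unfolding h_def by (intro continuous_intros)
  ultimately obtain z0 where z0: "z0 \<in> sphere 0 1" and min: "\<forall>z\<in>sphere 0 1. h z0 \<le> h z"
    using continuous_attains_inf[OF compact_sphere] by blast
  have "h z0 \<noteq> 0"
  proof
    assume "h z0 = 0"
    then have "\<forall>i\<in>A. fst z0 \<bullet> x i + snd z0 \<bullet> y i = 0"
      using sum_nonneg_eq_0_iff[OF \<open>finite A\<close>, of "\<lambda>i. \<bar>fst z0 \<bullet> x i + snd z0 \<bullet> y i\<bar>"]
      unfolding h_def by simp
    then have "A \<subseteq> {i. i < n \<and> fst z0 \<bullet> x i + snd z0 \<bullet> y i = 0}" using A by auto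
    then have "card A \<le> card {i. i < n \<and> fst z0 \<bullet> x i + snd z0 \<bullet> y i = 0}"
      by (intro card_mono) simp_all
    moreover have "z0 \<noteq> 0" using z0 by auto
    then have "fst z0 \<noteq> 0 \<or> snd z0 \<noteq> 0" by (metis prod.collapse zero_prod_def)
    ultimately show False using A card_hyperplane_le_kn[of "fst z0" "snd z0" n x y] by linarith
  qed
  moreover have "h z0 \<ge> 0" unfolding h_def by (simp add: sum_nonneg)
  ultimately have "h z0 > 0" by linarith
  then show ?thesis using min unfolding h_def by blast
qed

text \<open>The margin \<open>\<epsilon>\<close> is the minimum over the finitely many sets \<open>A\<close> of \<open>k\<^sub>n + 1\<close>
  observations of the bound above, divided by \<open>k\<^sub>n + 1\<close>.\<close>

lemma kn_uniform_margin:
  "\<exists>\<epsilon>>0. \<forall>v w. card {i. i < n \<and> \<bar>v \<bullet> x i + w \<bullet> y i\<bar> < \<epsilon> * norm (v, w)} \<le> kn n x y"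
proof -
  define k where "k = kn n x y"
  define \<A> where "\<A> = {A. A \<subseteq> {..<n} \<and> card A = Suc k}"
  have "finite \<A>" unfolding \<A>_def by (rule finite_subset[of _ "Pow {..<n}"]) auto
  have margin: "\<forall>A\<in>\<A>. \<exists>m>0. \<forall>z\<in>sphere 0 1. m \<le> (\<Sum>i\<in>A. \<bar>fst z \<bullet> x i + snd z \<bullet> y i\<bar>)"
  proof
    fix A assume "A \<in> \<A>"
    then show "\<exists>m>0. \<forall>z\<in>sphere 0 1. m \<le> (\<Sum>i\<in>A. \<bar>fst z \<bullet> x i + snd z \<bullet> y i\<bar>)"
      unfolding \<A>_def k_def by (intro hyperplane_sum_pos_on_sphere) auto
  qed
  obtain m where m: "\<forall>A\<in>\<A>. m A > 0 \<and>
      (\<forall>z\<in>sphere 0 1. m A \<le> (\<Sum>i\<in>A. \<bar>fst z \<bullet> x i + snd z \<bullet> y i\<bar>))"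
    using bchoice[OF margin] by blast
  define \<epsilon> where "\<epsilon> = Min (insert 1 (m ` \<A>)) / real (Suc k)"
  have "\<epsilon> > 0" using \<open>finite \<A>\<close> m unfolding \<epsilon>_def by (simp add: Min_gr_iff)
  have "card {i. i < n \<and> \<bar>v \<bullet> x i + w \<bullet> y i\<bar> < \<epsilon> * norm (v, w)} \<le> k" for v w
  proof (rule ccontr)
    define E where "E = {i. i < n \<and> \<bar>v \<bullet> x i + w \<bullet> y i\<bar> < \<epsilon> * norm (v, w)}"
    assume "\<not> card E \<le> k"
    then obtain A where "A \<subseteq> E" and "card A = Suc k"
      by (meson not_less_eq_eq obtain_subset_with_card_n)
    then have "A \<in> \<A>" "A \<noteq> {}" "finite A" unfolding \<A>_def E_def by (auto intro: card_ge_0_finite)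
    define N where "N = norm (v, w)"
    have close: "\<bar>v \<bullet> x i + w \<bullet> y i\<bar> < \<epsilon> * N" if "i \<in> A" for i
      using that \<open>A \<subseteq> E\<close> unfolding E_def N_def by auto
    obtain i0 where "i0 \<in> A" using \<open>A \<noteq> {}\<close> by blast
    then have "0 < \<epsilon> * N" using close[of i0] abs_ge_zero by (meson le_less_trans)
    then have "N > 0" using \<open>\<epsilon> > 0\<close> by (simp add: zero_less_mult_iff)
    have "norm ((1/N) *\<^sub>R (v, w)) = 1" using \<open>N > 0\<close> unfolding N_def by (simp del: scaleR_Pair)
    then have "(1/N) *\<^sub>R (v, w) \<in> sphere 0 1" by simp
    then have "m A \<le> (\<Sum>i\<in>A. \<bar>fst ((1/N) *\<^sub>R (v, w)) \<bullet> x i + snd ((1/N) *\<^sub>R (v, w)) \<bullet> y i\<bar>)"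
      using m \<open>A \<in> \<A>\<close> by blast
    also have "\<dots> = (\<Sum>i\<in>A. \<bar>v \<bullet> x i + w \<bullet> y i\<bar> / N)"
    proof (rule sum.cong)
      fix i
      have "fst ((1/N) *\<^sub>R (v, w)) \<bullet> x i + snd ((1/N) *\<^sub>R (v, w)) \<bullet> y i = (v \<bullet> x i + w \<bullet> y i) / N"
        by (simp add: add_divide_distrib)
      then show "\<bar>fst ((1/N) *\<^sub>R (v, w)) \<bullet> x i + snd ((1/N) *\<^sub>R (v, w)) \<bullet> y i\<bar> = \<bar>v \<bullet> x i + w \<bullet> y i\<bar> / N"
        using \<open>N > 0\<close> by (simp add: abs_divide)
    qed simp
    also have "\<dots> < (\<Sum>i\<in>A. \<epsilon>)"
      using close \<open>N > 0\<close> \<open>finite A\<close> \<open>A \<noteq> {}\<close> by (intro sum_strict_mono) (auto simp: field_simps)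
    also have "\<dots> = Min (insert 1 (m ` \<A>))" unfolding \<epsilon>_def using \<open>card A = Suc k\<close> by simp
    also have "\<dots> \<le> m A" using \<open>finite \<A>\<close> \<open>A \<in> \<A>\<close> by simp
    finally show False by simp
  qed
  then show ?thesis using \<open>\<epsilon> > 0\<close> unfolding k_def by blast
qed

section \<open>\<open>\<rho>\<close>-functions and M-scales\<close>

lemma rho_function_abs: "rho_function \<rho> \<Longrightarrow> \<rho> t = \<rho> \<bar>t\<bar>"
  unfolding rho_function_def by blast

lemma rho_function_zero: "rho_function \<rho> \<Longrightarrow> \<rho> 0 = 0"
  unfolding rho_function_def by blast

lemma rho_function_continuous: "rho_function \<rho> \<Longrightarrow> continuous_on UNIV \<rho>"
  unfolding rho_function_def by blast

lemma rho_function_mono: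
  assumes "rho_function \<rho>" and "\<bar>s\<bar> \<le> \<bar>t\<bar>"
  shows "\<rho> s \<le> \<rho> t"
proof -
  have "\<forall>u v. 0 \<le> u \<longrightarrow> u \<le> v \<longrightarrow> \<rho> u \<le> \<rho> v" using assms(1) unfolding rho_function_def by blast
  then have "\<rho> \<bar>s\<bar> \<le> \<rho> \<bar>t\<bar>" using assms(2) by simp
  then show ?thesis using rho_function_abs[OF assms(1)] by metis
qed

lemma rho_function_strict_mono:
  assumes "rho_function \<rho>" and "\<bar>s\<bar> < \<bar>t\<bar>" and "\<rho> s < 1"
  shows "\<rho> s < \<rho> t"
proof -
  have "\<forall>u v. 0 \<le> u \<longrightarrow> u < v \<longrightarrow> \<rho> u < 1 \<longrightarrow> \<rho> u < \<rho> v"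
    using assms(1) unfolding rho_function_def by blast
  then have "\<rho> \<bar>s\<bar> < \<rho> \<bar>t\<bar>" using assms(2,3) rho_function_abs[OF assms(1), of s] by simp
  then show ?thesis using rho_function_abs[OF assms(1)] by metis
qed

lemma rho_function_nonneg: "rho_function \<rho> \<Longrightarrow> 0 \<le> \<rho> t"
  using rho_function_mono[of \<rho> 0 t] rho_function_zero[of \<rho>] by simp

lemma rho_function_eventually_gt:
  assumes rho: "rho_function \<rho>" and "a < 1"
  shows "\<exists>u>0. \<forall>t. u \<le> \<bar>t\<bar> \<longrightarrow> a < \<rho> t"
proof -
  have "\<exists>t. a < \<rho> t"
  proof (cases "bdd_above (range \<rho>)")
    case True
    have "a < (SUP t. \<rho> t)" using rho \<open>a < 1\<close> unfolding rho_function_def by simp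
    then show ?thesis using less_cSUP_iff[OF _ True] by blast
  next
    case False
    then obtain r where "r \<in> range \<rho>" "\<not> r \<le> a" unfolding bdd_above_def by blast
    then show ?thesis by (metis not_le rangeE)
  qed
  then obtain t0 where "a < \<rho> t0" by blast
  then have "a < \<rho> t" if "\<bar>t0\<bar> + 1 \<le> \<bar>t\<bar>" for t
    using rho_function_mono[OF rho, of t0 t] that by simp
  then show ?thesis by (intro exI[of _ "\<bar>t0\<bar> + 1"]) auto
qed

lemma rho_function_lt_near_zero:
  assumes rho: "rho_function \<rho>" and "e > 0"
  shows "\<exists>\<eta>>0. \<forall>t. \<bar>t\<bar> < \<eta> \<longrightarrow> \<rho> t < e"
proof -
  obtain \<eta> where "\<eta> > 0" and \<eta>: "\<forall>t. dist t 0 < \<eta> \<longrightarrow> dist (\<rho> t) (\<rho> 0) < e"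
    using rho_function_continuous[OF rho] \<open>e > 0\<close> unfolding continuous_on_iff by (meson UNIV_I)
  then show ?thesis using rho_function_zero[OF rho] by (intro exI[of _ \<eta>]) (auto simp: dist_real_def)
qed

lemma continuous_on_rho_sum_scale:
  assumes "rho_function \<rho>"
  shows "continuous_on {0<..} (\<lambda>s. \<Sum>i<n. \<rho> (v i / s))"
proof (intro continuous_on_sum)
  fix i
  have "continuous_on {0<..} (\<lambda>s::real. v i / s)" by (intro continuous_intros) auto
  then show "continuous_on {0<..} (\<lambda>s. \<rho> (v i / s))"
    using continuous_on_compose2[OF rho_function_continuous[OF assms]] by blast
qed

text \<open>At a small scale every nonzero \<open>v\<^sub>i\<close> contributes more than \<open>nb / #{v\<^sub>i \<noteq> 0}\<close>, at a
  large scale every term is below \<open>b\<close>; the intermediate value theorem does the rest.\<close>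

lemma rho_sum_scale_eq_exists:
  fixes v :: "nat \<Rightarrow> real"
  assumes rho: "rho_function \<rho>" and "0 < b"
    and many: "real n * b < real (card {i. i < n \<and> v i \<noteq> 0})"
  shows "\<exists>s>0. (\<Sum>i<n. \<rho> (v i / s)) = real n * b"
proof -
  define Z where "Z = {i. i < n \<and> v i \<noteq> 0}"
  define F where "F = (\<lambda>s. \<Sum>i<n. \<rho> (v i / s))"
  have "finite Z" "Z \<subseteq> {..<n}" unfolding Z_def by auto
  note many = many[folded Z_def]
  have "0 \<le> real n * b" using \<open>0 < b\<close> by simp
  then have "0 < real (card Z)" using many by linarith
  moreover have "card Z \<le> n" using card_mono[OF finite_lessThan \<open>Z \<subseteq> {..<n}\<close>] by simp
  ultimately have "Z \<noteq> {}" "n > 0" by auto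
  have "real n * b / card Z < 1" using many \<open>0 < real (card Z)\<close> by (simp add: divide_less_eq)
  then obtain u where "u > 0" and u: "\<forall>t. u \<le> \<bar>t\<bar> \<longrightarrow> real n * b / card Z < \<rho> t"
    using rho_function_eventually_gt[OF rho] by blast
  define M where "M = Min ((\<lambda>i. \<bar>v i\<bar>) ` Z)"
  have "M > 0" unfolding M_def using \<open>finite Z\<close> \<open>Z \<noteq> {}\<close> by (auto simp: Z_def)
  define s0 where "s0 = M / u"
  have "s0 > 0" unfolding s0_def using \<open>M > 0\<close> \<open>u > 0\<close> by simp
  have "real n * b / card Z < \<rho> (v i / s0)" if "i \<in> Z" for i
  proof -
    have "u * M \<le> u * \<bar>v i\<bar>"
      unfolding M_def using \<open>finite Z\<close> that \<open>u > 0\<close> by (intro mult_left_mono) simp_all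
    then have "u \<le> \<bar>v i / s0\<bar>"
      using \<open>M > 0\<close> \<open>u > 0\<close> unfolding s0_def by (simp add: abs_divide abs_mult field_simps)
    then show ?thesis using u by blast
  qed
  then have "(\<Sum>i\<in>Z. real n * b / card Z) < (\<Sum>i\<in>Z. \<rho> (v i / s0))"
    using \<open>finite Z\<close> \<open>Z \<noteq> {}\<close> by (intro sum_strict_mono) auto
  also have "\<dots> \<le> F s0"
    unfolding F_def using \<open>Z \<subseteq> {..<n}\<close> rho_function_nonneg[OF rho] by (intro sum_mono2) auto
  finally have F0: "real n * b < F s0" using \<open>0 < real (card Z)\<close> by simp
  obtain \<eta> where "\<eta> > 0" and \<eta>: "\<forall>t. \<bar>t\<bar> < \<eta> \<longrightarrow> \<rho> t < b"
    using rho_function_lt_near_zero[OF rho \<open>0 < b\<close>] by blast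
  define V where "V = (\<Sum>i<n. \<bar>v i\<bar>) + 1"
  have "V > 0" unfolding V_def by (simp add: add_nonneg_pos sum_nonneg)
  define s1 where "s1 = V / \<eta>"
  have "s1 > 0" unfolding s1_def using \<open>\<eta> > 0\<close> \<open>V > 0\<close> by simp
  have "\<rho> (v i / s1) < b" if "i < n" for i
  proof -
    have "\<bar>v i\<bar> < V"
      using member_le_sum[of i "{..<n}" "\<lambda>i. \<bar>v i\<bar>"] that unfolding V_def by simp
    then have "\<eta> * \<bar>v i\<bar> < \<eta> * V" using \<open>\<eta> > 0\<close> by simp
    then have "\<bar>v i / s1\<bar> < \<eta>"
      using \<open>\<eta> > 0\<close> \<open>V > 0\<close> unfolding s1_def by (simp add: abs_divide abs_mult field_simps)
    then show ?thesis using \<eta> by blast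
  qed
  then have F1: "F s1 < real n * b" unfolding F_def using \<open>n > 0\<close>
    using sum_strict_mono[of "{..<n}" "\<lambda>i. \<rho> (v i / s1)" "\<lambda>_. b"] by (simp add: lessThan_empty_iff)
  have "{min s0 s1..max s0 s1} \<subseteq> {0<..}" using \<open>s0 > 0\<close> \<open>s1 > 0\<close> by auto
  then have cont: "continuous_on {min s0 s1..max s0 s1} F"
    unfolding F_def by (rule continuous_on_subset[OF continuous_on_rho_sum_scale[OF rho]])
  obtain s where "min s0 s1 \<le> s" "s \<le> max s0 s1" "F s = real n * b"
  proof (cases "s0 \<le> s1")
    case True
    then show ?thesis using IVT2'[of F s1 "real n * b" s0] F0 F1 cont that by auto
  next
    case False
    then show ?thesis using IVT'[of F s1 "real n * b" s0] F0 F1 cont that by auto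
  qed
  moreover have "s > 0" using \<open>min s0 s1 \<le> s\<close> \<open>s0 > 0\<close> \<open>s1 > 0\<close> by linarith
  ultimately show ?thesis unfolding F_def by blast
qed

text \<open>The sum is nonincreasing in the scale, and strictly decreasing as long as some
  nonzero term is below the supremum \<open>1\<close>; if all are at \<open>1\<close>, the sum exceeds \<open>nb\<close>.\<close>

lemma rho_sum_scale_eq_unique:
  fixes v :: "nat \<Rightarrow> real"
  assumes rho: "rho_function \<rho>"
    and many: "real n * b < real (card {i. i < n \<and> v i \<noteq> 0})"
    and "0 < s" "(\<Sum>i<n. \<rho> (v i / s)) = real n * b"
    and "0 < t" "(\<Sum>i<n. \<rho> (v i / t)) = real n * b"
  shows "s = t"
proof -
  define Z where "Z = {i. i < n \<and> v i \<noteq> 0}"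
  define F where "F = (\<lambda>s. \<Sum>i<n. \<rho> (v i / s))"
  have no_smaller: False if "0 < t1" "t1 < t2" "F t1 = real n * b" "F t2 = real n * b" for t1 t2
  proof (cases "\<exists>i\<in>Z. \<rho> (v i / t2) < 1")
    case True
    then obtain i where "i \<in> Z" "\<rho> (v i / t2) < 1" by blast
    then have "\<bar>v i / t2\<bar> < \<bar>v i / t1\<bar>"
      using that unfolding Z_def by (simp add: abs_divide divide_strict_left_mono)
    then have "\<rho> (v i / t2) < \<rho> (v i / t1)"
      using rho_function_strict_mono[OF rho] \<open>\<rho> (v i / t2) < 1\<close> by blast
    moreover have "\<rho> (v j / t2) \<le> \<rho> (v j / t1)" for j
      using that by (intro rho_function_mono[OF rho]) (simp add: abs_divide divide_left_mono)
    ultimately have "F t2 < F t1"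
      unfolding F_def using \<open>i \<in> Z\<close> unfolding Z_def by (intro sum_strict_mono_ex1) auto
    then show False using that by simp
  next
    case False
    then have "\<And>i. i \<in> Z \<Longrightarrow> 1 \<le> \<rho> (v i / t2)" by (meson not_le)
    then have "real (card Z) \<le> (\<Sum>i\<in>Z. \<rho> (v i / t2))"
      using sum_mono[of Z "\<lambda>_. 1::real" "\<lambda>i. \<rho> (v i / t2)"] by simp
    also have "\<dots> \<le> F t2"
      unfolding F_def Z_def using rho_function_nonneg[OF rho] by (intro sum_mono2) auto
    finally show False using that many unfolding Z_def by simp
  qed
  show ?thesis
  proof (cases s t rule: linorder_cases)
    case less then show ?thesis using no_smaller[of s t] assms(3-) unfolding F_def by blast
  next
    case greater then show ?thesis using no_smaller[of t s] assms(3-) unfolding F_def by blast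
  qed
qed

lemma mscale_pos_eq:
  assumes rho: "rho_function \<rho>" and "0 < b" and nz: "mscale \<rho> b n v \<noteq> 0"
  shows "0 < mscale \<rho> b n v \<and> (\<Sum>i<n. \<rho> (v i / mscale \<rho> b n v)) = real n * b"
proof -
  have "{i. i < n \<and> v i = 0} \<union> {i. i < n \<and> v i \<noteq> 0} = {..<n}"
    "{i. i < n \<and> v i = 0} \<inter> {i. i < n \<and> v i \<noteq> 0} = {}" by auto
  then have "card {i. i < n \<and> v i = 0} + card {i. i < n \<and> v i \<noteq> 0} = n"
    by (metis card_Un_disjoint card_lessThan finite_Collect_conjI finite_Collect_less_nat)
  moreover have less: "\<not> real (card {i. i < n \<and> v i = 0}) \<ge> real n * (1 - b)"
    using nz unfolding mscale_def by auto
  ultimately have many: "real n * b < real (card {i. i < n \<and> v i \<noteq> 0})"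
    by (simp add: algebra_simps flip: of_nat_add)
  then have "n > 0" using \<open>0 < b\<close> by (cases n) auto
  then have eq_iff: "(1 / real n) * (\<Sum>i<n. \<rho> (v i / s)) = b \<longleftrightarrow> (\<Sum>i<n. \<rho> (v i / s)) = real n * b" for s
    by (auto simp: field_simps)
  have "\<exists>!s. s > 0 \<and> (1 / real n) * (\<Sum>i<n. \<rho> (v i / s)) = b"
    unfolding eq_iff using rho_sum_scale_eq_exists[OF rho \<open>0 < b\<close> many]
      rho_sum_scale_eq_unique[OF rho many] by blast
  then have "0 < mscale \<rho> b n v \<and> (1 / real n) * (\<Sum>i<n. \<rho> (v i / mscale \<rho> b n v)) = b"
    unfolding mscale_def using less by (simp only: if_False) (rule theI')
  then show ?thesis unfolding eq_iff .
qed

section \<open>The objective\<close>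

lemma rho_sum_le_imp_few_large:
  fixes n m :: nat
  assumes rho: "rho_function \<rho>" and "0 \<le> c" and "c < real m"
  shows "\<exists>T>0. \<forall>d. (\<Sum>i<n. \<rho> (d i)) \<le> c \<longrightarrow> card {i. i < n \<and> T \<le> d i} < m"
proof -
  have "c / real m < 1" using assms(2,3) by (simp add: divide_less_eq)
  then obtain T where "T > 0" and T: "\<forall>t. T \<le> \<bar>t\<bar> \<longrightarrow> c / real m < \<rho> t"
    using rho_function_eventually_gt[OF rho] by blast
  have "card G < m" if sum: "(\<Sum>i<n. \<rho> (d i)) \<le> c" and G: "G = {i. i < n \<and> T \<le> d i}" for d G
  proof (rule ccontr)
    assume "\<not> card G < m"
    moreover have "0 < m" using assms(2,3) by linarith
    ultimately have "G \<noteq> {}" by auto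
    have "finite G" unfolding G by simp
    have "c = real m * (c / real m)" using \<open>0 < m\<close> by simp
    also have "\<dots> \<le> real (card G) * (c / real m)"
      using \<open>\<not> card G < m\<close> assms(2) by (intro mult_right_mono) simp_all
    also have "\<dots> = (\<Sum>i\<in>G. c / real m)" by simp
    also have "\<dots> < (\<Sum>i\<in>G. \<rho> (d i))"
      using T G \<open>T > 0\<close> \<open>G \<noteq> {}\<close> \<open>finite G\<close> by (intro sum_strict_mono) auto
    also have "\<dots> \<le> (\<Sum>i<n. \<rho> (d i))"
      using G rho_function_nonneg[OF rho] by (intro sum_mono2) auto
    finally show False using sum by simp
  qed
  then show ?thesis using \<open>T > 0\<close> by blast
qed

lemma quadratic_form_matrix_inv_nonneg:
  assumes "pd_sym \<Gamma>"
  shows "0 \<le> r \<bullet> (matrix_inv \<Gamma> *v r)"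
  using psd_sym_matrix_inv[OF pd_sym_imp_psd_sym pd_sym_det_nz] assms unfolding psd_sym_def by blast

lemma maha_nonneg: "pd_sym \<Gamma> \<Longrightarrow> 0 \<le> maha x y B \<Gamma> i"
  unfolding maha_def using quadratic_form_matrix_inv_nonneg by simp

lemma inner_residual_square_le:
  assumes "pd_sym \<Gamma>"
  shows "(w \<bullet> (y i - transpose B *v x i))\<^sup>2 \<le> (w \<bullet> (\<Gamma> *v w)) * (maha x y B \<Gamma> i)\<^sup>2"
  using inner_square_le_quadratic_forms[OF pd_sym_imp_psd_sym pd_sym_det_nz, OF assms assms]
    quadratic_form_matrix_inv_nonneg[OF assms]
  unfolding maha_def by simp

lemma ex_not_in_union_lessThan:
  assumes "finite G" "finite E" "card G + card E < n"
  shows "\<exists>i<n. i \<notin> G \<and> i \<notin> E"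
proof (rule ccontr)
  assume "\<not> (\<exists>i<n. i \<notin> G \<and> i \<notin> E)"
  then have "card {..<n} \<le> card (G \<union> E)" using assms(1,2) by (intro card_mono) auto
  also have "\<dots> \<le> card G + card E" by (rule card_Un_le)
  finally show False using assms(3) by simp
qed

text \<open>
  Below the level \<open>n/2\<close> fewer than \<open>n - k\<^sub>n\<close> residuals exceed \<open>T\<sigma>\<close>, and at most \<open>k\<^sub>n\<close>
  observations are \<open>\<epsilon>\<close>-close to the hyperplane \<open>(-Bw)'x + w'y = 0\<close>. An observation that is
  neither has \<open>\<epsilon> |(-Bw, w)| \<le> |w'r\<^sub>i| \<le> (w'\<Gamma>w)\<^sup>1\<^sup>/\<^sup>2 T\<sigma>\<close>, where \<open>r\<^sub>i\<close> is its residual.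
\<close>

lemma sublevel_quadratic_domination:
  fixes x :: "nat \<Rightarrow> real^'p" and y :: "nat \<Rightarrow> real^'q"
  assumes rho: "rho_function \<rho>" and "\<sigma> > 0" and kn: "2 * real (kn n x y) < real n"
  shows "\<exists>c>0. \<forall>(B::real^'q^'p) \<Gamma>. pd_sym \<Gamma> \<and> (\<Sum>i<n. \<rho> (maha x y B \<Gamma> i / \<sigma>)) \<le> real n / 2 \<longrightarrow>
           (\<forall>w. c * ((norm (B *v w))\<^sup>2 + (norm w)\<^sup>2) \<le> w \<bullet> (\<Gamma> *v w))"
proof -
  obtain \<epsilon> where "\<epsilon> > 0"
    and margin: "\<forall>v w. card {i. i < n \<and> \<bar>v \<bullet> x i + w \<bullet> y i\<bar> < \<epsilon> * norm (v, w)} \<le> kn n x y"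
    using kn_uniform_margin by blast
  have "real n / 2 < real (n - kn n x y)" using kn by (simp add: of_nat_diff)
  moreover have "0 \<le> real n / 2" by simp
  ultimately obtain T where "T > 0"
    and few: "\<forall>d. (\<Sum>i<n. \<rho> (d i)) \<le> real n / 2 \<longrightarrow> card {i. i < n \<and> T \<le> d i} < n - kn n x y"
    using rho_sum_le_imp_few_large[OF rho] by blast
  define c where "c = (\<epsilon> / (T * \<sigma>))\<^sup>2"
  have "c * ((norm (B *v w))\<^sup>2 + (norm w)\<^sup>2) \<le> w \<bullet> (\<Gamma> *v w)"
    if pd: "pd_sym \<Gamma>" and level: "(\<Sum>i<n. \<rho> (maha x y B \<Gamma> i / \<sigma>)) \<le> real n / 2"
    for B :: "real^'q^'p" and \<Gamma> w
  proof -
    define v where "v = - (B *v w)"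
    have "card {i. i < n \<and> T \<le> maha x y B \<Gamma> i / \<sigma>} + kn n x y < n"
      using few[rule_format, OF level] by (simp add: less_diff_conv)
    moreover have "card {i. i < n \<and> \<bar>v \<bullet> x i + w \<bullet> y i\<bar> < \<epsilon> * norm (v, w)} \<le> kn n x y"
      using margin by blast
    ultimately obtain i where "i < n" "\<not> T \<le> maha x y B \<Gamma> i / \<sigma>"
      and "\<not> \<bar>v \<bullet> x i + w \<bullet> y i\<bar> < \<epsilon> * norm (v, w)"
      using ex_not_in_union_lessThan[of "{i. i < n \<and> T \<le> maha x y B \<Gamma> i / \<sigma>}"
          "{i. i < n \<and> \<bar>v \<bullet> x i + w \<bullet> y i\<bar> < \<epsilon> * norm (v, w)}" n] by auto
    then have "maha x y B \<Gamma> i / \<sigma> < T" and far: "\<epsilon> * norm (v, w) \<le> \<bar>v \<bullet> x i + w \<bullet> y i\<bar>"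
      by simp_all
    then have short: "maha x y B \<Gamma> i \<le> T * \<sigma>" using \<open>\<sigma> > 0\<close> by (simp add: field_simps)
    have "v \<bullet> x i + w \<bullet> y i = w \<bullet> (y i - transpose B *v x i)"
      unfolding v_def inner_diff_right inner_transpose_matrix by simp
    then have "(\<epsilon> * norm (v, w))\<^sup>2 \<le> (w \<bullet> (y i - transpose B *v x i))\<^sup>2"
      using power_mono[OF far, of 2] \<open>\<epsilon> > 0\<close> by simp
    also have "\<dots> \<le> (w \<bullet> (\<Gamma> *v w)) * (maha x y B \<Gamma> i)\<^sup>2" by (rule inner_residual_square_le[OF pd])
    also have "\<dots> \<le> (w \<bullet> (\<Gamma> *v w)) * (T * \<sigma>)\<^sup>2"
    proof (rule mult_left_mono)
      show "(maha x y B \<Gamma> i)\<^sup>2 \<le> (T * \<sigma>)\<^sup>2"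
        using short maha_nonneg[OF pd] by (rule power_mono)
      show "0 \<le> w \<bullet> (\<Gamma> *v w)" using pd_sym_imp_psd_sym[OF pd] unfolding psd_sym_def by blast
    qed
    finally have "\<epsilon>\<^sup>2 * ((norm (B *v w))\<^sup>2 + (norm w)\<^sup>2) \<le> (T * \<sigma>)\<^sup>2 * (w \<bullet> (\<Gamma> *v w))"
      unfolding v_def by (simp add: norm_Pair power_mult_distrib mult.commute)
    then show ?thesis
      unfolding c_def using \<open>T > 0\<close> \<open>\<sigma> > 0\<close> by (simp add: power_divide field_simps)
  qed
  moreover have "c > 0" unfolding c_def using \<open>\<epsilon> > 0\<close> \<open>T > 0\<close> \<open>\<sigma> > 0\<close> by simp
  ultimately show ?thesis by blast
qed

lemma continuous_on_precision_objective:
  fixes x :: "nat \<Rightarrow> real^'p" and y :: "nat \<Rightarrow> real^'q" and \<rho> :: "real \<Rightarrow> real"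
  assumes "continuous_on UNIV \<rho>"
  shows "continuous_on UNIV (\<lambda>q::(real^'q^'p) \<times> (real^'q^'q). \<Sum>i<n.
           \<rho> (sqrt ((y i - transpose (fst q) *v x i) \<bullet> (snd q *v (y i - transpose (fst q) *v x i))) / \<sigma>))"
proof (rule continuous_on_sum)
  fix i
  have "continuous_on UNIV (\<lambda>q::(real^'q^'p) \<times> (real^'q^'q).
          sqrt ((y i - transpose (fst q) *v x i) \<bullet> (snd q *v (y i - transpose (fst q) *v x i))) / \<sigma>)"
    unfolding divide_inverse matrix_vector_mult_def transpose_def by (intro continuous_intros)
  then show "continuous_on UNIV (\<lambda>q::(real^'q^'p) \<times> (real^'q^'q).
      \<rho> (sqrt ((y i - transpose (fst q) *v x i) \<bullet> (snd q *v (y i - transpose (fst q) *v x i))) / \<sigma>))"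
    using continuous_on_compose2[OF assms] by blast
qed

lemma compact_sublevel_attains_min:
  fixes f :: "'a \<Rightarrow> real" and g :: "'b::topological_space \<Rightarrow> real"
  assumes "compact K" "continuous_on K g" "K \<subseteq> \<phi> ` A"
    and fg: "\<And>a. a \<in> A \<Longrightarrow> f a = g (\<phi> a)"
    and sublevel: "\<And>a. a \<in> A \<Longrightarrow> f a \<le> c \<Longrightarrow> \<phi> a \<in> K"
    and "start \<in> A" "f start \<le> c"
  shows "\<exists>a\<in>A. \<forall>a'\<in>A. f a \<le> f a'"
proof -
  have "\<phi> start \<in> K" using sublevel assms(6,7) .
  then obtain k where "k \<in> K" and min: "\<forall>k'\<in>K. g k \<le> g k'"
    using continuous_attains_inf[OF assms(1) _ assms(2)] by blast
  then obtain a where "a \<in> A" "\<phi> a = k" using assms(3) by blast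
  have "f a \<le> f a'" if "a' \<in> A" for a'
  proof (cases "f a' \<le> c")
    case True
    then show ?thesis using fg[OF \<open>a \<in> A\<close>] fg[OF that] min sublevel[OF that] \<open>\<phi> a = k\<close> by simp
  next
    case False
    have "f a \<le> f start" using fg[OF \<open>a \<in> A\<close>] fg[OF \<open>start \<in> A\<close>] min \<open>\<phi> start \<in> K\<close> \<open>\<phi> a = k\<close> by simp
    then show ?thesis using False \<open>f start \<le> c\<close> by simp
  qed
  then show ?thesis using \<open>a \<in> A\<close> by blast
qed

lemma robust_objective_attains_min:
  fixes x :: "nat \<Rightarrow> real^'p" and y :: "nat \<Rightarrow> real^'q"
    and B1 :: "real^'q^'p" and \<Gamma>1 :: "real^'q^'q"
  assumes rho: "rho_function \<rho>" and "\<sigma> > 0" and kn: "2 * real (kn n x y) < real n"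
    and "pd_sym \<Gamma>1" "det \<Gamma>1 = 1" and level: "(\<Sum>i<n. \<rho> (maha x y B1 \<Gamma>1 i / \<sigma>)) \<le> real n / 2"
  defines "S \<equiv> \<lambda>B \<Gamma>. \<Sum>i<n. \<rho> (maha x y B \<Gamma> i / \<sigma>)"
  shows "\<exists>Bh \<Gamma>h. pd_sym \<Gamma>h \<and> det \<Gamma>h = 1 \<and> (\<forall>B \<Gamma>. pd_sym \<Gamma> \<and> det \<Gamma> = 1 \<longrightarrow> S Bh \<Gamma>h \<le> S B \<Gamma>)"
proof -
  obtain c where "c > 0" and dom: "\<forall>(B::real^'q^'p) \<Gamma>. pd_sym \<Gamma> \<and> S B \<Gamma> \<le> real n / 2 \<longrightarrow>
      (\<forall>w. c * ((norm (B *v w))\<^sup>2 + (norm w)\<^sup>2) \<le> w \<bullet> (\<Gamma> *v w))"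
    using sublevel_quadratic_domination[OF rho \<open>\<sigma> > 0\<close> kn] unfolding S_def by blast
  obtain RB RP where box: "\<forall>(B::real^'q^'p) (\<Gamma>::real^'q^'q). pd_sym \<Gamma> \<and> det \<Gamma> = 1 \<and>
      (\<forall>w. c * ((norm (B *v w))\<^sup>2 + (norm w)\<^sup>2) \<le> w \<bullet> (\<Gamma> *v w))
      \<longrightarrow> B \<in> entry_box RB \<and> matrix_inv \<Gamma> \<in> psd_unimodular_box RP"
    using quadratic_domination_imp_bounded[OF \<open>c > 0\<close>] by blast
  define g where "g = (\<lambda>q::(real^'q^'p) \<times> (real^'q^'q). \<Sum>i<n.
      \<rho> (sqrt ((y i - transpose (fst q) *v x i) \<bullet> (snd q *v (y i - transpose (fst q) *v x i))) / \<sigma>))"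
  define A where "A = {(B::real^'q^'p, \<Gamma>::real^'q^'q). pd_sym \<Gamma> \<and> det \<Gamma> = 1}"
  have "\<exists>a\<in>A. \<forall>a'\<in>A. case_prod S a \<le> case_prod S a'"
  proof (rule compact_sublevel_attains_min[where \<phi> = "\<lambda>(B, \<Gamma>). (B, matrix_inv \<Gamma>)" and g = g
        and K = "entry_box RB \<times> psd_unimodular_box RP" and c = "real n / 2" and start = "(B1, \<Gamma>1)"])
    show "compact (entry_box RB \<times> psd_unimodular_box RP)"
      by (intro compact_Times compact_entry_box compact_psd_unimodular_box)
    show "continuous_on (entry_box RB \<times> psd_unimodular_box RP) g"
      using continuous_on_precision_objective[OF rho_function_continuous[OF rho]]
      unfolding g_def by (rule continuous_on_subset) simp
    show "entry_box RB \<times> psd_unimodular_box RP \<subseteq> (\<lambda>(B, \<Gamma>). (B, matrix_inv \<Gamma>)) ` A"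
      using psd_unimodular_box_subset_matrix_inv_image[of RP] unfolding A_def by (auto simp: image_iff)
    show "case_prod S a = g ((\<lambda>(B, \<Gamma>). (B, matrix_inv \<Gamma>)) a)" for a
      by (auto simp: S_def g_def maha_def split: prod.split)
    show "(\<lambda>(B, \<Gamma>). (B, matrix_inv \<Gamma>)) a \<in> entry_box RB \<times> psd_unimodular_box RP"
      if "a \<in> A" and "case_prod S a \<le> real n / 2" for a
    proof -
      obtain B \<Gamma> where a: "a = (B, \<Gamma>)" by (cases a)
      with that have \<Gamma>: "pd_sym \<Gamma>" "det \<Gamma> = 1" and "S B \<Gamma> \<le> real n / 2"
        unfolding A_def by auto
      then have "\<forall>w. c * ((norm (B *v w))\<^sup>2 + (norm w)\<^sup>2) \<le> w \<bullet> (\<Gamma> *v w)" using dom by blast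
      then have "B \<in> entry_box RB \<and> matrix_inv \<Gamma> \<in> psd_unimodular_box RP" using box \<Gamma> by blast
      then show ?thesis using a by simp
    qed
    show "(B1, \<Gamma>1) \<in> A" "case_prod S (B1, \<Gamma>1) \<le> real n / 2"
      using \<open>pd_sym \<Gamma>1\<close> \<open>det \<Gamma>1 = 1\<close> level unfolding A_def S_def by auto
  qed
  then show ?thesis unfolding A_def by auto
qed

theorem theorem1:
  fixes n :: nat
    and x :: "nat \<Rightarrow> real^'p" and y :: "nat \<Rightarrow> real^'q"
    and B0 :: "real^'q^'p" and u :: "nat \<Rightarrow> real^'q"
    and \<rho>0 \<rho>1 :: "real \<Rightarrow> real"
    and Bt :: "real^'q^'p" and St :: "real^'q^'q"
  assumes model: "\<forall>i<n. y i = transpose B0 *v x i + u i"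
    and rho0: "rho_function \<rho>0" and rho1: "rho_function \<rho>1"
    and le: "\<forall>t. \<rho>1 t \<le> \<rho>0 t"
    and St_pd: "pd_sym St" and St_det: "det St = 1"
    and kn_small: "real (kn n x y) / real n < 1/2"
  shows "let \<sigma> = mscale \<rho>0 (1/2) n (maha x y Bt St);
             S = (\<lambda>B \<Gamma>. \<Sum>i<n. \<rho>1 (maha x y B \<Gamma> i / \<sigma>))
         in \<exists>Bh \<Gamma>h. pd_sym \<Gamma>h \<and> det \<Gamma>h = 1 \<and>
              (\<forall>B \<Gamma>. pd_sym \<Gamma> \<and> det \<Gamma> = 1 \<longrightarrow> S Bh \<Gamma>h \<le> S B \<Gamma>)"
proof -
  define \<sigma> where "\<sigma> = mscale \<rho>0 (1/2) n (maha x y Bt St)"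
  define S where "S = (\<lambda>(B::real^'q^'p) (\<Gamma>::real^'q^'q). \<Sum>i<n. \<rho>1 (maha x y B \<Gamma> i / \<sigma>))"
  have "\<exists>Bh \<Gamma>h. pd_sym \<Gamma>h \<and> det \<Gamma>h = 1 \<and> (\<forall>B \<Gamma>. pd_sym \<Gamma> \<and> det \<Gamma> = 1 \<longrightarrow> S Bh \<Gamma>h \<le> S B \<Gamma>)"
  proof (cases "n = 0 \<or> \<sigma> = 0")
    case True
    then have "S B \<Gamma> = 0" for B \<Gamma> unfolding S_def using rho_function_zero[OF rho1] by auto
    moreover have "pd_sym (mat 1 :: real^'q^'q)" by (simp add: pd_sym_def transpose_mat)
    ultimately show ?thesis by (intro exI[of _ 0] exI[of _ "mat 1"]) simp
  next
    case False
    then have "\<sigma> > 0" and "(\<Sum>i<n. \<rho>0 (maha x y Bt St i / \<sigma>)) = real n / 2"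
      using mscale_pos_eq[OF rho0, of "1/2" n "maha x y Bt St"] unfolding \<sigma>_def by auto
    then have "S Bt St \<le> real n / 2" unfolding S_def using le by (metis sum_mono)
    moreover have "2 * real (kn n x y) < real n" using kn_small False by (simp add: field_simps)
    ultimately show ?thesis
      using robust_objective_attains_min[OF rho1 \<open>\<sigma> > 0\<close> _ St_pd St_det] unfolding S_def by blast
  qed
  then show ?thesis unfolding Let_def S_def \<sigma>_def .
qed

end
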